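(* Let $\mu$ be a probability measure on $\mathbb{R}$. If there exists a probability measure $\nu$ on $\mathbb{R}$ with support included in $(-\infty,0]$ such that $\mu*\nu\in\mathscr{C}$, then $\mu\in\mathscr{C}$.
   Context: $\mathscr{C}$ is the set of probability measures $\mu$ on $\mathbb{R}$ such that every probability measure $\mu_1$ on $\mathbb{R}$ with $\mu_1^{*n}=\mu^{*n}$ on the Borel subsets of $[0,\infty)$ for all $n\ge1$ ($*n$ = $n$-fold convolution power) satisfies $\mu_1=\mu$. *)

theory Defs
  imports "HOL-Probability.Probability"
begin

definition prob_measure_real :: "real measure \<Rightarrow> bool" where
  "prob_measure_real M \<longleftrightarrow> prob_space M \<and> sets M = sets borel"

fun conv_power :: "real measure \<Rightarrow> nat \<Rightarrow> real measure" where
  "conv_power M 0 = return borel 0"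
| "conv_power M (Suc n) = convolution M (conv_power M n)"

definition measure_support :: "real measure \<Rightarrow> real set" where
  "measure_support M = {x. \<forall>e>0. emeasure M (ball x e) \<noteq> 0}"

definition classC :: "real measure set" where
  "classC = {\<mu>. prob_measure_real \<mu> \<and>
     (\<forall>\<mu>1. prob_measure_real \<mu>1 \<and>
        (\<forall>n\<ge>1. \<forall>A\<in>sets borel. A \<subseteq> {0..} \<longrightarrow>
            emeasure (conv_power \<mu>1 n) A = emeasure (conv_power \<mu> n) A)
        \<longrightarrow> \<mu>1 = \<mu>)}"

end

theory Submission
  imports Defs
begin

text \<open>
  Suppose \<open>\<mu>1\<close> agrees with \<open>\<mu>\<close> on \<open>[0, \<infinity>)\<close> in every convolution power. Convolving with a measure
  carried by \<open>(-\<infinity>, 0]\<close> cannot move mass from \<open>(-\<infinity>, 0)\<close> into \<open>[0, \<infinity>)\<close>, and the powers of \<open>\<nu>\<close>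
  are again carried by \<open>(-\<infinity>, 0]\<close>; so \<open>(\<mu>1 * \<nu>)\<^sup>n = \<mu>1\<^sup>n * \<nu>\<^sup>n\<close> agrees with \<open>(\<mu> * \<nu>)\<^sup>n\<close>
  on \<open>[0, \<infinity>)\<close>, and \<open>\<mu> * \<nu> \<in> C\<close> forces \<open>\<mu>1 * \<nu> = \<mu> * \<nu>\<close>.

  To recover \<open>\<mu>\<close> on \<open>(-\<infinity>, 0)\<close>, integrate \<open>e^(kz)\<close> over \<open>z < 0\<close> against \<open>\<mu>1 * \<nu> = \<mu> * \<nu>\<close>:
  the points \<open>x < 0\<close> contribute \<open>(\<integral> e^(ky) d\<nu>) \<cdot> \<integral>\<^bsub>x<0\<^esub> e^(kx) d\<mu>\<close>, where the first
  factor is positive and finite, and the points \<open>x \<ge> 0\<close> contribute equally for \<open>\<mu>\<close> and \<open>\<mu>1\<close>. Hence the image of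
  \<open>\<mu>\<close> restricted to \<open>(-\<infinity>, 0)\<close> under \<open>exp\<close> has the same moments as that of \<open>\<mu>1\<close>, and by
  Weierstrass approximation on \<open>[0, 1]\<close> the two images coincide.
\<close>

lemma prob_measure_real_sets: "prob_measure_real M \<Longrightarrow> sets M = sets borel"
  unfolding prob_measure_real_def by auto

lemma prob_measure_real_space: "prob_measure_real M \<Longrightarrow> space M = UNIV"
  using sets_eq_imp_space_eq[OF prob_measure_real_sets] by auto

lemma prob_measure_real_prob_space: "prob_measure_real M \<Longrightarrow> prob_space M"
  unfolding prob_measure_real_def by auto

lemma prob_measure_real_finite_measure: "prob_measure_real M \<Longrightarrow> finite_measure M"
  using prob_measure_real_prob_space prob_space.finite_measure by blast

lemma prob_measure_real_convolution:
  assumes "prob_measure_real M" "prob_measure_real N"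
  shows "prob_measure_real (M \<star> N)"
proof -
  interpret pair_prob_space M N
    using assms by (simp add: pair_prob_space_def pair_sigma_finite_def prob_measure_real_prob_space
        prob_space_imp_sigma_finite)
  have [measurable_cong]: "sets M = sets borel" "sets N = sets borel"
    using assms by (auto simp: prob_measure_real_sets)
  show ?thesis
    unfolding prob_measure_real_def convolution_def by (auto intro!: prob_space_distr)
qed

lemma AE_convolution_nonpos:
  fixes M N :: "real measure"
  assumes "finite_measure M" "finite_measure N"
    and [measurable_cong]: "sets M = sets borel" "sets N = sets borel"
    and "AE x in M. x \<le> 0" "AE y in N. y \<le> 0"
  shows "AE z in M \<star> N. z \<le> 0"
proof -
  interpret pair_sigma_finite M N
    using assms by (simp add: pair_sigma_finite_def finite_measure.sigma_finite_measure)
  have "AE p in M \<Otimes>\<^sub>M N. fst p + snd p \<le> 0"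
    by (rule AE_pair_measure) (use assms(5,6) in \<open>auto elim!: AE_mp\<close>)
  then show ?thesis
    unfolding convolution_def by (subst AE_distr_iff) (auto simp: case_prod_beta)
qed

lemma prob_measure_real_conv_power: "prob_measure_real M \<Longrightarrow> prob_measure_real (conv_power M n)"
proof (induction n)
  case 0
  show ?case by (simp add: prob_measure_real_def prob_space_return)
qed (simp add: prob_measure_real_convolution)

lemma convolution_return_0:
  assumes "prob_measure_real M"
  shows "M \<star> return borel 0 = M"
proof (rule measure_eqI)
  fix A assume "A \<in> sets (M \<star> return borel 0)"
  then have A[measurable]: "A \<in> sets borel" by simp
  have "emeasure (M \<star> return borel 0) A = \<integral>\<^sup>+x. \<integral>\<^sup>+y. indicator A (x + y) \<partial>return borel 0 \<partial>M"
    using assms by (intro convolution_emeasure')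
      (auto simp: prob_measure_real_finite_measure prob_measure_real_sets prob_space_return prob_space.finite_measure)
  also have "\<dots> = emeasure M A"
    using assms by (simp add: nn_integral_return prob_measure_real_sets)
  finally show "emeasure (M \<star> return borel 0) A = emeasure M A" .
qed (use assms in \<open>simp add: prob_measure_real_sets\<close>)

lemma conv_power_1: "prob_measure_real M \<Longrightarrow> conv_power M 1 = M"
  by (simp add: convolution_return_0)

lemma convolution_commute:
  "prob_measure_real M \<Longrightarrow> prob_measure_real N \<Longrightarrow> M \<star> N = (N \<star> M)"
  by (intro convolution_commutative) (auto simp: prob_measure_real_finite_measure prob_measure_real_sets)

lemma convolution_assoc:
  "prob_measure_real L \<Longrightarrow> prob_measure_real M \<Longrightarrow> prob_measure_real N \<Longrightarrow>
    L \<star> (M \<star> N) = ((L \<star> M) \<star> N)"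
  by (intro convolution_associative) (auto simp: prob_measure_real_finite_measure prob_measure_real_sets)

lemma conv_power_convolution:
  assumes "prob_measure_real M" "prob_measure_real N"
  shows "conv_power (M \<star> N) n = (conv_power M n \<star> conv_power N n)"
proof (induction n)
  case 0
  show ?case by (simp add: convolution_return_0 prob_measure_real_def prob_space_return)
next
  case (Suc n)
  let ?Mn = "conv_power M n" and ?Nn = "conv_power N n"
  have p: "prob_measure_real ?Mn" "prob_measure_real ?Nn"
    using assms by (auto intro: prob_measure_real_conv_power)
  note conv = prob_measure_real_convolution
  have "conv_power (M \<star> N) (Suc n) = ((M \<star> N) \<star> (?Mn \<star> ?Nn))"
    using Suc by simp
  also have "\<dots> = (M \<star> ((N \<star> ?Mn) \<star> ?Nn))"
    using assms p by (simp add: convolution_assoc conv)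
  also have "N \<star> ?Mn = (?Mn \<star> N)"
    using assms(2) p(1) by (rule convolution_commute)
  also have "M \<star> ((?Mn \<star> N) \<star> ?Nn) = ((M \<star> ?Mn) \<star> (N \<star> ?Nn))"
    using assms p by (simp add: convolution_assoc conv)
  finally show ?case by simp
qed

lemma null_sets_compl_measure_support:
  assumes sets_M: "sets M = sets borel"
  shows "- measure_support M \<in> null_sets M"
proof -
  define F where "F = {ball y e | y e. e > 0 \<and> emeasure M (ball y e) = 0}"
  obtain F' where F': "F' \<subseteq> F" "countable F'" "\<Union>F' = \<Union>F"
    by (rule Lindelof[of F]) (auto simp: F_def)
  have "(\<Union>S\<in>F'. S) \<in> null_sets M"
  proof (rule null_sets_UN')
    fix S assume "S \<in> F'"
    then obtain y e where "S = ball y e" "emeasure M (ball y e) = 0"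
      using F' by (auto simp: F_def)
    then show "S \<in> null_sets M"
      by (auto simp: null_sets_def sets_M)
  qed (rule F')
  moreover have "- measure_support M = \<Union>F"
  proof (intro set_eqI iffI)
    fix x assume "x \<in> - measure_support M"
    then obtain e where "e > 0" "emeasure M (ball x e) = 0"
      by (auto simp: measure_support_def)
    then show "x \<in> \<Union>F"
      unfolding F_def by (intro UnionI[of "ball x e"]) auto
  next
    fix x assume "x \<in> \<Union>F"
    then obtain y e where "x \<in> ball y e" "emeasure M (ball y e) = 0"
      by (auto simp: F_def)
    moreover have "ball x (e - dist y x) \<subseteq> ball y e"
      by (simp add: dist_commute ball_subset_ball_iff)
    ultimately have "emeasure M (ball x (e - dist y x)) = 0"
      by (metis emeasure_eq_0 sets.sets_into_space sets_M borel_open open_ball subset_UNIV)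
    moreover have "e - dist y x > 0"
      using \<open>x \<in> ball y e\<close> by simp
    ultimately show "x \<in> - measure_support M"
      unfolding measure_support_def by blast
  qed
  ultimately show ?thesis
    using F' by simp
qed

lemma AE_nonpos_if_measure_support_nonpos:
  assumes "sets M = sets borel" "measure_support M \<subseteq> {..0}"
  shows "AE y in M. y \<le> (0::real)"
  using null_sets_compl_measure_support[OF assms(1)] assms(2)
  by (auto elim!: AE_I' simp: not_le)

lemma AE_conv_power_nonpos:
  assumes "prob_measure_real M" "AE x in M. x \<le> 0"
  shows "AE x in conv_power M n. x \<le> 0"
proof (induction n)
  case 0
  show ?case
    unfolding conv_power.simps by (subst AE_return) auto
next
  case (Suc n)
  show ?case
    unfolding conv_power.simps using assms Suc prob_measure_real_conv_power[OF assms(1)]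
    by (intro AE_convolution_nonpos) (auto simp: prob_measure_real_finite_measure prob_measure_real_sets)
qed

definition agree_on_nonneg :: "real measure \<Rightarrow> real measure \<Rightarrow> bool" where
  "agree_on_nonneg M N \<longleftrightarrow> (\<forall>A\<in>sets borel. A \<subseteq> {0..} \<longrightarrow> emeasure M A = emeasure N A)"

lemma agree_on_nonneg_convolution:
  assumes pA: "prob_measure_real A" and pB: "prob_measure_real B" and pQ: "prob_measure_real Q"
    and Q_nonpos: "AE y in Q. y \<le> 0" and agree: "agree_on_nonneg A B"
  shows "agree_on_nonneg (A \<star> Q) (B \<star> Q)"
  unfolding agree_on_nonneg_def
proof (intro ballI impI)
  fix S :: "real set" assume S[measurable]: "S \<in> sets borel" and S_nonneg: "S \<subseteq> {0..}"
  have conv: "emeasure (M \<star> Q) S = \<integral>\<^sup>+y. emeasure M {x. x + y \<in> S} \<partial>Q" if "prob_measure_real M" for M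
  proof -
    have "M \<star> Q = (Q \<star> M)"
      using that pQ by (rule convolution_commute)
    then show ?thesis
      using that pQ by (simp only:) (rule convolution_emeasure;
          simp add: prob_measure_real_finite_measure prob_measure_real_sets prob_measure_real_space)
  qed
  have "AE y in Q. emeasure A {x. x + y \<in> S} = emeasure B {x. x + y \<in> S}"
    using Q_nonpos
  proof eventually_elim
    case (elim y)
    have "{x::real. x + y \<in> S} \<in> sets borel" by measurable
    moreover have "{x. x + y \<in> S} \<subseteq> {0..}" using elim S_nonneg by force
    ultimately show ?case using agree by (simp add: agree_on_nonneg_def)
  qed
  then show "emeasure (A \<star> Q) S = emeasure (B \<star> Q) S"
    by (simp add: conv[OF pA] conv[OF pB] cong: nn_integral_cong_AE)
qed

lemma convolution_eq_if_convolution_in_classC: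
  assumes "prob_measure_real \<mu>" "prob_measure_real \<mu>1" "prob_measure_real \<nu>"
    and \<nu>_nonpos: "AE y in \<nu>. y \<le> 0" and "(\<mu> \<star> \<nu>) \<in> classC"
    and agree: "\<And>n. n \<ge> 1 \<Longrightarrow> agree_on_nonneg (conv_power \<mu>1 n) (conv_power \<mu> n)"
  shows "\<mu>1 \<star> \<nu> = (\<mu> \<star> \<nu>)"
proof -
  have "agree_on_nonneg (conv_power (\<mu>1 \<star> \<nu>) n) (conv_power (\<mu> \<star> \<nu>) n)" if "n \<ge> 1" for n
    using assms agree[OF that]
    by (simp add: conv_power_convolution agree_on_nonneg_convolution prob_measure_real_conv_power
        AE_conv_power_nonpos)
  then show ?thesis
    using assms prob_measure_real_convolution unfolding classC_def agree_on_nonneg_def by blast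
qed

lemma nn_integral_nonneg_eq_if_agree_on_nonneg:
  assumes sets_M: "sets M = sets borel" and sets_N: "sets N = sets borel"
    and agree: "agree_on_nonneg M N" and g: "g \<in> borel_measurable borel"
  shows "(\<integral>\<^sup>+ x. indicator {0..} x * g x \<partial>M) = (\<integral>\<^sup>+ x. indicator {0..} x * g x \<partial>N)"
proof -
  have "density M (indicator {0..}) = density N (indicator {0..})"
  proof (rule measure_eqI)
    fix A assume "A \<in> sets (density M (indicator {0..}))"
    then have "A \<in> sets borel" using sets_M by simp
    then show "emeasure (density M (indicator {0..})) A = emeasure (density N (indicator {0..})) A"
      using agree sets_M sets_N by (simp add: emeasure_restricted agree_on_nonneg_def)
  qed (simp add: sets_M sets_N)
  then show ?thesis
    using g sets_M sets_N by (simp add: nn_integral_density[symmetric])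
qed

definition neg_exp_integral :: "real measure \<Rightarrow> (real \<Rightarrow> real) \<Rightarrow> real" where
  "neg_exp_integral M h = (\<integral>x. indicator {..<0} x * h (exp x) \<partial>M)"

definition neg_exp_power :: "nat \<Rightarrow> real \<Rightarrow> ennreal" where
  "neg_exp_power k z = ennreal (indicator {..<0} z * exp z ^ k)"

lemma borel_measurable_neg_exp_power[measurable]: "neg_exp_power k \<in> borel_measurable borel"
  unfolding neg_exp_power_def by measurable

lemma neg_exp_power_le_1: "neg_exp_power k z \<le> 1"
  by (auto simp: neg_exp_power_def indicator_def power_le_one)

lemma neg_exp_integral_power:
  assumes "prob_measure_real M"
  shows "neg_exp_integral M (\<lambda>u. u ^ k) = enn2real (\<integral>\<^sup>+ x. neg_exp_power k x \<partial>M)"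
  using prob_measure_real_sets[OF assms] unfolding neg_exp_integral_def neg_exp_power_def
  by (intro integral_eq_nn_integral) auto

lemma nn_integral_neg_exp_power_shift:
  fixes Q :: "real measure"
  assumes [measurable_cong]: "sets Q = sets borel" and Q_nonpos: "AE y in Q. y \<le> 0" and "x < 0"
  shows "(\<integral>\<^sup>+ y. neg_exp_power k (x + y) \<partial>Q) = (\<integral>\<^sup>+ y. ennreal (exp y ^ k) \<partial>Q) * neg_exp_power k x"
proof -
  have "AE y in Q. neg_exp_power k (x + y) = neg_exp_power k x * ennreal (exp y ^ k)"
    using Q_nonpos by eventually_elim
      (use \<open>x < 0\<close> in \<open>simp add: neg_exp_power_def exp_add power_mult_distrib ennreal_mult\<close>)
  then show ?thesis
    by (simp add: nn_integral_cmult[symmetric] mult.commute cong: nn_integral_cong_AE)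
qed

lemma nn_integral_convolution_neg_exp_power:
  assumes pL: "prob_measure_real L" and pQ: "prob_measure_real Q" and Q_nonpos: "AE y in Q. y \<le> 0"
  shows "(\<integral>\<^sup>+ z. neg_exp_power k z \<partial>L \<star> Q)
    = (\<integral>\<^sup>+ x. indicator {0..} x * (\<integral>\<^sup>+ y. neg_exp_power k (x + y) \<partial>Q) \<partial>L)
      + (\<integral>\<^sup>+ y. ennreal (exp y ^ k) \<partial>Q) * (\<integral>\<^sup>+ x. neg_exp_power k x \<partial>L)"
proof -
  have sets_L[measurable_cong]: "sets L = sets borel" and sets_Q[measurable_cong]: "sets Q = sets borel"
    using pL pQ by (auto simp: prob_measure_real_sets)
  interpret Q: prob_space Q using pQ by (rule prob_measure_real_prob_space)
  define G where "G x = (\<integral>\<^sup>+ y. neg_exp_power k (x + y) \<partial>Q)" for x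
  have [measurable]: "G \<in> borel_measurable borel"
    unfolding G_def by measurable
  have G_neg: "G x * indicator {..<0} x = (\<integral>\<^sup>+ y. ennreal (exp y ^ k) \<partial>Q) * neg_exp_power k x" for x
    by (cases "x < 0")
      (simp_all add: G_def nn_integral_neg_exp_power_shift[OF sets_Q Q_nonpos], simp add: neg_exp_power_def)
  have "(\<integral>\<^sup>+ z. neg_exp_power k z \<partial>L \<star> Q) = (\<integral>\<^sup>+ x. G x \<partial>L)"
    unfolding G_def using pL pQ
    by (intro nn_integral_convolution) (auto simp: prob_measure_real_finite_measure sets_L sets_Q)
  also have "\<dots> = (\<integral>\<^sup>+ x. indicator {0..} x * G x + G x * indicator {..<0} x \<partial>L)"
    by (rule nn_integral_cong) (auto simp: indicator_def)
  also have "\<dots> = (\<integral>\<^sup>+ x. indicator {0..} x * G x \<partial>L)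
      + (\<integral>\<^sup>+ x. (\<integral>\<^sup>+ y. ennreal (exp y ^ k) \<partial>Q) * neg_exp_power k x \<partial>L)"
    by (subst nn_integral_add) (auto simp: G_neg)
  finally show ?thesis
    by (simp add: nn_integral_cmult G_def)
qed

lemma neg_exp_integral_power_eq_if_convolution_eq:
  assumes pM: "prob_measure_real M" and pM1: "prob_measure_real M1" and pQ: "prob_measure_real Q"
    and Q_nonpos: "AE y in Q. y \<le> 0"
    and conv: "M \<star> Q = (M1 \<star> Q)" and agree: "agree_on_nonneg M M1"
  shows "neg_exp_integral M (\<lambda>u. u ^ k) = neg_exp_integral M1 (\<lambda>u. u ^ k)"
proof -
  interpret Q: prob_space Q using pQ by (rule prob_measure_real_prob_space)
  interpret M: prob_space M using pM by (rule prob_measure_real_prob_space)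
  have [measurable_cong]: "sets Q = sets borel" using pQ by (rule prob_measure_real_sets)
  define G where "G x = (\<integral>\<^sup>+ y. neg_exp_power k (x + y) \<partial>Q)" for x
  define c where "c = (\<integral>\<^sup>+ y. ennreal (exp y ^ k) \<partial>Q)"
  have [measurable]: "G \<in> borel_measurable borel"
    unfolding G_def by measurable
  have "c \<le> (\<integral>\<^sup>+ y. 1 \<partial>Q)"
    unfolding c_def
    by (intro nn_integral_mono_AE) (use Q_nonpos in \<open>eventually_elim, simp add: power_le_one\<close>)
  then have c_finite: "c \<noteq> \<top>"
    by (auto simp: Q.emeasure_space_1 top_unique)
  have c_nonzero: "c \<noteq> 0"
    unfolding c_def by (subst nn_integral_0_iff_AE) (auto simp: Q.AE_False)
  have "G x \<le> (\<integral>\<^sup>+ y. 1 \<partial>Q)" for x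
    unfolding G_def by (intro nn_integral_mono neg_exp_power_le_1)
  then have "(\<integral>\<^sup>+ x. indicator {0..} x * G x \<partial>M) \<le> (\<integral>\<^sup>+ x. 1 \<partial>M)"
    by (intro nn_integral_mono) (simp add: Q.emeasure_space_1 indicator_def)
  then have nonneg_part_finite: "(\<integral>\<^sup>+ x. indicator {0..} x * G x \<partial>M) \<noteq> \<top>"
    by (auto simp: M.emeasure_space_1 top_unique)
  have "(\<integral>\<^sup>+ x. indicator {0..} x * G x \<partial>M) = (\<integral>\<^sup>+ x. indicator {0..} x * G x \<partial>M1)"
    using pM pM1 agree
    by (intro nn_integral_nonneg_eq_if_agree_on_nonneg) (auto simp: prob_measure_real_sets)
  then have "c * (\<integral>\<^sup>+ x. neg_exp_power k x \<partial>M) = c * (\<integral>\<^sup>+ x. neg_exp_power k x \<partial>M1)"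
    using nn_integral_convolution_neg_exp_power[OF pM pQ Q_nonpos, of k]
      nn_integral_convolution_neg_exp_power[OF pM1 pQ Q_nonpos, of k] conv nonneg_part_finite
    by (simp add: G_def c_def ennreal_add_left_cancel)
  then show ?thesis
    using c_finite c_nonzero pM pM1 by (simp add: ennreal_mult_cancel_left neg_exp_integral_power)
qed

lemma integrable_neg_exp:
  fixes h :: "real \<Rightarrow> real"
  assumes pM: "prob_measure_real M" and h: "continuous_on UNIV h"
  shows "integrable M (\<lambda>x. indicator {..<0} x * h (exp x))"
proof -
  interpret M: prob_space M using pM by (rule prob_measure_real_prob_space)
  have [measurable_cong]: "sets M = sets borel" using pM by (rule prob_measure_real_sets)
  have [measurable]: "h \<in> borel_measurable borel" using h by (rule borel_measurable_continuous_onI)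
  have "compact (h ` {0..1})"
    using h by (intro compact_continuous_image) (auto intro: continuous_on_subset)
  then obtain B where B: "\<And>u. u \<in> {0..1} \<Longrightarrow> norm (h u) \<le> B"
    by (meson bounded_iff compact_imp_bounded image_eqI)
  have "norm (indicator {..<0} x * h (exp x)) \<le> B" for x
    using B[of 0] B[of "exp x"] by (cases "x < 0") auto
  then show ?thesis
    by (intro M.integrable_const_bound[where B=B] AE_I2) auto
qed

lemma neg_exp_integral_polynomial:
  assumes "prob_measure_real M"
  shows "neg_exp_integral M (\<lambda>u. \<Sum>i\<le>n. a i * u ^ i) = (\<Sum>i\<le>n. a i * neg_exp_integral M (\<lambda>u. u ^ i))"
proof -
  have "integrable M (\<lambda>x. indicator {..<0} x * exp x ^ i)" for i
    using integrable_neg_exp[OF assms, of "\<lambda>u. u ^ i"] by (simp add: continuous_intros)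
  then show ?thesis
    unfolding neg_exp_integral_def
    by (simp add: sum_distrib_left ac_simps flip: Bochner_Integration.integral_sum)
qed

lemma neg_exp_integral_approx:
  fixes h g :: "real \<Rightarrow> real"
  assumes pM: "prob_measure_real M" and h: "continuous_on UNIV h" and g: "continuous_on UNIV g"
    and close: "\<And>u. u \<in> {0..1} \<Longrightarrow> \<bar>h u - g u\<bar> < e"
  shows "\<bar>neg_exp_integral M h - neg_exp_integral M g\<bar> \<le> e"
proof -
  interpret M: prob_space M using pM by (rule prob_measure_real_prob_space)
  note ih = integrable_neg_exp[OF pM h] and ig = integrable_neg_exp[OF pM g]
  have e_nonneg: "0 \<le> e" using close[of 0] by auto
  have "\<bar>indicator {..<0} x * h (exp x) - indicator {..<0} x * g (exp x)\<bar> \<le> e" for x :: real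
    using close[of "exp x"] e_nonneg by (cases "x < 0") auto
  then have "\<bar>\<integral>x. indicator {..<0} x * h (exp x) - indicator {..<0} x * g (exp x) \<partial>M\<bar> \<le> (\<integral>x. e \<partial>M)"
    using ih ig by (intro integral_abs_bound_integral) auto
  then show ?thesis
    unfolding neg_exp_integral_def using ih ig by (simp add: M.prob_space)
qed

lemma neg_exp_integral_eq_if_powers_eq:
  fixes h :: "real \<Rightarrow> real"
  assumes pM: "prob_measure_real M" and pM1: "prob_measure_real M1"
    and powers: "\<And>k. neg_exp_integral M (\<lambda>u. u ^ k) = neg_exp_integral M1 (\<lambda>u. u ^ k)"
    and h: "continuous_on UNIV h"
  shows "neg_exp_integral M h = neg_exp_integral M1 h"
proof (rule ccontr)
  assume ne: "neg_exp_integral M h \<noteq> neg_exp_integral M1 h"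
  define e where "e = \<bar>neg_exp_integral M h - neg_exp_integral M1 h\<bar> / 3"
  have "e > 0" using ne unfolding e_def by auto
  then obtain g where "real_polynomial_function g" and close: "\<And>u. u \<in> {0..1} \<Longrightarrow> \<bar>h u - g u\<bar> < e"
    using Stone_Weierstrass_real_polynomial_function[of "{0..1}" h e] h
    by (auto intro: continuous_on_subset)
  then obtain a n where g: "g = (\<lambda>u. \<Sum>i\<le>n. a i * u ^ i)"
    using real_polynomial_function_imp_sum by blast
  have "continuous_on UNIV g" unfolding g by (intro continuous_intros)
  then have "\<bar>neg_exp_integral M h - neg_exp_integral M g\<bar> \<le> e"
    and "\<bar>neg_exp_integral M1 h - neg_exp_integral M1 g\<bar> \<le> e"
    using neg_exp_integral_approx pM pM1 h close by blast+
  moreover have "neg_exp_integral M g = neg_exp_integral M1 g"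
    unfolding g using pM pM1 powers by (simp add: neg_exp_integral_polynomial)
  ultimately have "\<bar>neg_exp_integral M h - neg_exp_integral M1 h\<bar> \<le> 2 * e"
    by linarith
  then show False
    using \<open>e > 0\<close> unfolding e_def by simp
qed

lemma tendsto_neg_exp_integral_cutoff:
  assumes pM: "prob_measure_real M" and "a < 0"
  shows "(\<lambda>m. neg_exp_integral M (\<lambda>u. max 0 (min 1 (1 - real m * (u - exp a))))) \<longlonglongrightarrow> measure M {..a}"
proof -
  interpret M: prob_space M using pM by (rule prob_measure_real_prob_space)
  have sets_M[measurable_cong]: "sets M = sets borel" using pM by (rule prob_measure_real_sets)
  define f where "f m x = indicator {..<0} x * max 0 (min 1 (1 - real m * (exp x - exp a)))" for m x
  have f_lim: "(\<lambda>m. f m x) \<longlonglongrightarrow> indicator {..a} x" for x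
  proof (cases "x \<le> a")
    case True
    then have "f m x = 1" for m
      using \<open>a < 0\<close> by (simp add: f_def mult_nonneg_nonpos)
    then show ?thesis using True by (simp add: indicator_def)
  next
    case False
    then have d: "exp x - exp a > 0" by simp
    obtain N :: nat where N: "N > 1 / (exp x - exp a)" using reals_Archimedean2 by blast
    have "f m x = 0" if "m \<ge> N" for m
    proof -
      have "real m > 1 / (exp x - exp a)" using N that by linarith
      then have "real m * (exp x - exp a) > 1" using d by (simp add: field_simps)
      then show ?thesis by (simp add: f_def)
    qed
    then have "(\<lambda>m. f m x) \<longlonglongrightarrow> 0"
      by (intro tendsto_eventually) (auto simp: eventually_sequentially)
    then show ?thesis using False by simp
  qed
  have f_bound: "\<bar>f m x\<bar> \<le> 1" for m x
    by (simp add: f_def indicator_def)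
  have [measurable]: "f m \<in> borel_measurable borel" for m
    unfolding f_def by measurable
  have "(\<lambda>m. \<integral>x. f m x \<partial>M) \<longlonglongrightarrow> (\<integral>x. indicator {..a} x \<partial>M)"
    by (rule integral_dominated_convergence[where w="\<lambda>_. 1"]) (auto intro!: AE_I2 f_lim f_bound)
  then show ?thesis
    by (simp add: neg_exp_integral_def f_def sets_M)
qed

lemma measure_greaterThan:
  assumes "prob_measure_real M"
  shows "measure M {x<..} = 1 - measure M {..x}"
proof -
  interpret prob_space M using assms by (rule prob_measure_real_prob_space)
  have "{x<..} = space M - {..x}"
    using assms by (auto simp: prob_measure_real_space)
  then show ?thesis
    using assms prob_compl[of "{..x}"] by (simp add: prob_measure_real_sets)
qed

lemma eq_if_agree_on_nonneg_and_measure_atMost: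
  assumes pM: "prob_measure_real M" and pN: "prob_measure_real N"
    and nonneg: "agree_on_nonneg M N" and neg: "\<And>a. a < 0 \<Longrightarrow> measure M {..a} = measure N {..a}"
  shows "M = N"
proof (rule measure_eqI_lessThan)
  interpret M: prob_space M using pM by (rule prob_measure_real_prob_space)
  interpret N: prob_space N using pN by (rule prob_measure_real_prob_space)
  show "sets M = sets borel" "sets N = sets borel"
    using pM pN by (auto simp: prob_measure_real_sets)
  fix x :: real
  show "emeasure M {x<..} < \<infinity>"
    by (simp add: M.emeasure_eq_measure)
  show "emeasure M {x<..} = emeasure N {x<..}"
  proof (cases "x < 0")
    case True
    then show ?thesis
      using neg[OF True] pM pN
      by (simp add: M.emeasure_eq_measure N.emeasure_eq_measure measure_greaterThan)
  qed (use nonneg in \<open>simp add: agree_on_nonneg_def subset_eq\<close>)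
qed

lemma measure_atMost_eq_if_neg_exp_integral_eq:
  assumes pM: "prob_measure_real M" and pM1: "prob_measure_real M1"
    and eq: "\<And>h. continuous_on UNIV h \<Longrightarrow> neg_exp_integral M h = neg_exp_integral M1 h"
    and "a < 0"
  shows "measure M {..a} = measure M1 {..a}"
proof -
  have "continuous_on UNIV (\<lambda>u. max 0 (min 1 (1 - real m * (u - exp a))))" for m :: nat
    by (intro continuous_intros)
  then have "(\<lambda>m. neg_exp_integral M (\<lambda>u. max 0 (min 1 (1 - real m * (u - exp a))))) \<longlonglongrightarrow> measure M1 {..a}"
    using tendsto_neg_exp_integral_cutoff[OF pM1 \<open>a < 0\<close>] eq by simp
  then show ?thesis
    using tendsto_neg_exp_integral_cutoff[OF pM \<open>a < 0\<close>] LIMSEQ_unique by blast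
qed

theorem theorem5p2:
  fixes \<mu> :: "real measure"
  assumes "prob_measure_real \<mu>"
    and "\<exists>\<nu>. prob_measure_real \<nu> \<and> measure_support \<nu> \<subseteq> {..0} \<and> convolution \<mu> \<nu> \<in> classC"
  shows "\<mu> \<in> classC"
proof -
  obtain \<nu> where p\<nu>: "prob_measure_real \<nu>" and "measure_support \<nu> \<subseteq> {..0}"
    and \<mu>\<nu>_in_C: "convolution \<mu> \<nu> \<in> classC"
    using assms(2) by blast
  then have \<nu>_nonpos: "AE y in \<nu>. y \<le> 0"
    by (intro AE_nonpos_if_measure_support_nonpos prob_measure_real_sets)
  have "\<mu>1 = \<mu>" if p\<mu>1: "prob_measure_real \<mu>1"
    and "\<forall>n\<ge>1. \<forall>A\<in>sets borel. A \<subseteq> {0..} \<longrightarrow> emeasure (conv_power \<mu>1 n) A = emeasure (conv_power \<mu> n) A"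
    for \<mu>1
  proof -
    have agree_powers: "agree_on_nonneg (conv_power \<mu>1 n) (conv_power \<mu> n)" if "n \<ge> 1" for n
      using that \<open>\<forall>n\<ge>1. _\<close> unfolding agree_on_nonneg_def by blast
    then have agree: "agree_on_nonneg \<mu>1 \<mu>"
      using agree_powers[of 1] assms(1) p\<mu>1 by (simp only: conv_power_1 order_refl)
    have "\<mu>1 \<star> \<nu> = (\<mu> \<star> \<nu>)"
      by (rule convolution_eq_if_convolution_in_classC) (use assms(1) p\<mu>1 p\<nu> \<nu>_nonpos \<mu>\<nu>_in_C agree_powers in auto)
    then have "neg_exp_integral \<mu>1 (\<lambda>u. u ^ k) = neg_exp_integral \<mu> (\<lambda>u. u ^ k)" for k
      using neg_exp_integral_power_eq_if_convolution_eq assms(1) p\<mu>1 p\<nu> \<nu>_nonpos agree by blast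
    then have "measure \<mu>1 {..a} = measure \<mu> {..a}" if "a < 0" for a
      using measure_atMost_eq_if_neg_exp_integral_eq neg_exp_integral_eq_if_powers_eq assms(1) p\<mu>1 that
      by blast
    then show "\<mu>1 = \<mu>"
      using eq_if_agree_on_nonneg_and_measure_atMost assms(1) p\<mu>1 agree by blast
  qed
  then show ?thesis
    using assms(1) unfolding classC_def by blast
qed

end
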